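(* Let $x$ be a grid function with $x_s\neq0$ at every node that satisfies the scheme (S) with $\check B=\frac{2(\cos\tau-1)}{\tau^2}\,x$ (discretization for the parabolic bottom $b(x)=-x^2/2$). Then at every node $$\Big(x_t\sin t-x\,\frac{\sin\hat t-\sin t}{\tau}\Big)_{\check t}+\Big(\sin t\,\big((\hat x_s\check x_s)^{-1}-\alpha^2x_s\big)\Big)_{\bar s}=0,$$ where $t$ is the time coordinate of the node and $\hat t=t+\tau$.
   Context: Fix mesh steps $\tau>0$, $h>0$ and a constant $\alpha\in\mathbb R$. A grid function is a real-valued function $f=f(t,s)$ on the uniform orthogonal mesh $\{(n\tau,kh): n,k\in\mathbb Z\}$; at the node $(n\tau,kh)$ the symbol $t$ denotes the number $n\tau$. Shifts: $\hat f=f(t+\tau,s)$, $\check f=f(t-\tau,s)$, $f_+=f(t,s+h)$, $f_-=f(t,s-h)$; a shift applied to a composite expression shifts the whole expression, including explicit occurrences of $t$ (e.g. $\hat x_s$ is $x_s$ evaluated at $(t+\tau,s)$). Differences: $f_t=(\hat f-f)/\tau$, $f_{\check t}=(f-\check f)/\tau$, $f_s=(f_+-f)/h$, $f_{\bar s}=(f-f_-)/h$; iterated differences compose, e.g. $x_{t\check t}=(x_t)_{\check t}=(\hat x-2x+\check x)/\tau^2$ and $x_{s\bar s}=(x_s)_{\bar s}=(x_+-2x+x_-)/h^2$. Given a grid function $x$ with $x_s\neq0$ everywhere and a grid function $\check B$ (an approximation of the bottom-slope term), the scheme (S) is the requirement that at every node $$x_{t\check t}-\alpha^2x_{s\bar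 s}+\Big(\frac{1}{\hat x_s\check x_s}\Big)_{\bar s}-\check B=0 .$$ *)

theory Defs
  imports Complex_Main
begin

text \<open>A grid function is a map from node indices (n,k) :: int \<times> int to reals;
  the node (n,k) is the point (n*tau, k*h) of the mesh.\<close>

type_synonym grid = "int \<Rightarrow> int \<Rightarrow> real"

definition dt :: "real \<Rightarrow> grid \<Rightarrow> grid" where
  "dt tau f = (\<lambda>n k. (f (n+1) k - f n k) / tau)"

definition dtb :: "real \<Rightarrow> grid \<Rightarrow> grid" where
  "dtb tau f = (\<lambda>n k. (f n k - f (n-1) k) / tau)"

definition ds :: "real \<Rightarrow> grid \<Rightarrow> grid" where
  "ds h f = (\<lambda>n k. (f n (k+1) - f n k) / h)"

definition dsb :: "real \<Rightarrow> grid \<Rightarrow> grid" where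
  "dsb h f = (\<lambda>n k. (f n k - f n (k-1)) / h)"

definition scheme :: "real \<Rightarrow> real \<Rightarrow> real \<Rightarrow> grid \<Rightarrow> grid \<Rightarrow> bool" where
  "scheme tau h alpha x Bc \<longleftrightarrow>
     (\<forall>n k. dtb tau (dt tau x) n k - alpha^2 * dsb h (ds h x) n k
        + dsb h (\<lambda>n k. 1 / (ds h x (n+1) k * ds h x (n-1) k)) n k - Bc n k = 0)"

end

theory Submission
  imports Defs
begin

text \<open>The conservation law is the scheme multiplied by \<open>sin t\<close>. In time, a discrete Wronskian
  identity makes \<open>g x\<^sub>t\<^sub>t - x g\<^sub>t\<^sub>t\<close> (second differences) an exact backward difference for any \<open>g\<close>;
  for \<open>g = sin t\<close> the term \<open>x g\<^sub>t\<^sub>t\<close> is \<open>sin t\<close> times the discretized bottom term, since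
  \<open>sin t\<close> is an eigenfunction of the second difference with eigenvalue \<open>2 (cos \<tau> - 1) / \<tau>\<^sup>2\<close>.
  In space, \<open>sin t\<close> is a constant factor.\<close>

lemma dtb_dt_wronskian:
  fixes x g :: grid
  assumes "tau \<noteq> 0"
  shows "dtb tau (\<lambda>n k. dt tau x n k * g n k - x n k * dt tau g n k) n k
       = g n k * dtb tau (dt tau x) n k - x n k * dtb tau (dt tau g) n k"
  using assms by (simp add: dtb_def dt_def field_simps power2_eq_square)

lemma dtb_dt_sin:
  "dtb tau (dt tau (\<lambda>n k. sin (of_int n * tau))) n k
     = 2 * (cos tau - 1) / tau^2 * sin (of_int n * tau)"
proof -
  define t where "t = of_int n * tau"
  have "dtb tau (dt tau (\<lambda>n k. sin (of_int n * tau))) n k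
      = ((sin (t + tau) - sin t) / tau - (sin t - sin (t - tau)) / tau) / tau"
    by (simp add: dtb_def dt_def t_def distrib_right left_diff_distrib)
  also have "\<dots> = (sin (t + tau) + sin (t - tau) - 2 * sin t) / tau^2"
    by (simp add: power2_eq_square diff_divide_distrib add_divide_distrib)
  also have "sin (t + tau) + sin (t - tau) = 2 * cos tau * sin t"
    by (simp add: sin_add sin_diff)
  finally show ?thesis
    by (simp add: t_def algebra_simps)
qed

lemma dsb_mult_time:
  fixes f :: grid
  shows "dsb h (\<lambda>n k. c n * f n k) n k = c n * dsb h f n k"
  by (simp add: dsb_def right_diff_distrib)

lemma dsb_diff_scaled:
  fixes f g :: grid
  shows "dsb h (\<lambda>n k. f n k - a * g n k) n k = dsb h f n k - a * dsb h g n k"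
  by (cases "h = 0") (simp_all add: dsb_def field_simps)

theorem mainTheorem7:
  fixes tau h alpha :: real and x :: grid
  assumes "tau > 0" and "h > 0"
    and "\<forall>n k. ds h x n k \<noteq> 0"
    and "scheme tau h alpha x (\<lambda>n k. 2 * (cos tau - 1) / tau^2 * x n k)"
  shows "\<forall>n k.
     dtb tau (\<lambda>n k. dt tau x n k * sin (of_int n * tau)
                      - x n k * (sin (of_int (n+1) * tau) - sin (of_int n * tau)) / tau) n k
   + dsb h (\<lambda>n k. sin (of_int n * tau) *
                      (1 / (ds h x (n+1) k * ds h x (n-1) k) - alpha^2 * ds h x n k)) n k = 0"
proof (intro allI)
  fix n k :: int
  let ?g = "\<lambda>n k. sin (of_int n * tau) :: real"
  let ?Q = "\<lambda>n k. 1 / (ds h x (n+1) k * ds h x (n-1) k)"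
  have scheme_nk: "dtb tau (dt tau x) n k - alpha^2 * dsb h (ds h x) n k + dsb h ?Q n k
      - 2 * (cos tau - 1) / tau^2 * x n k = 0"
    using assms(4) unfolding scheme_def by blast
  have wronskian_form: "(\<lambda>n k. dt tau x n k * ?g n k - x n k * (?g (n+1) k - ?g n k) / tau)
      = (\<lambda>n k. dt tau x n k * ?g n k - x n k * dt tau ?g n k)"
    by (simp add: dt_def)
  have time_part: "dtb tau (\<lambda>n k. dt tau x n k * ?g n k
                      - x n k * (?g (n+1) k - ?g n k) / tau) n k
      = ?g n k * (dtb tau (dt tau x) n k - 2 * (cos tau - 1) / tau^2 * x n k)"
    unfolding wronskian_form dtb_dt_wronskian[OF less_imp_neq[OF assms(1), symmetric]] dtb_dt_sin
    by (simp add: algebra_simps)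
  have space_part: "dsb h (\<lambda>n k. ?g n k * (?Q n k - alpha^2 * ds h x n k)) n k
      = ?g n k * (dsb h ?Q n k - alpha^2 * dsb h (ds h x) n k)"
    using dsb_mult_time[of h "\<lambda>n. sin (of_int n * tau)" "\<lambda>n k. ?Q n k - alpha^2 * ds h x n k"]
    by (simp add: dsb_diff_scaled)
  show "dtb tau (\<lambda>n k. dt tau x n k * ?g n k - x n k * (?g (n+1) k - ?g n k) / tau) n k
      + dsb h (\<lambda>n k. ?g n k * (?Q n k - alpha^2 * ds h x n k)) n k = 0"
    unfolding time_part space_part distrib_left[symmetric]
    using scheme_nk by (simp add: algebra_simps)
qed

end
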